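(* Let $\beta\in(0,1)$, $V_{\mathrm{th}}\in\mathbb{R}$, and let $c_1,\dots,c_T\in\mathbb{R}$ be an arbitrary input sequence. Let $\mathcal{H}(x)=1$ if $x\ge 0$ and $\mathcal{H}(x)=0$ otherwise. (Sequential LIF with soft reset.) Define $u_0=0$, $s_0=0$ and, for $t=1,\dots,T$, $$u_t=\beta\,(u_{t-1}-V_{\mathrm{th}}s_{t-1})+c_t,\qquad s_t=\mathcal{H}(u_t-V_{\mathrm{th}}).$$ (Decoupled reset.) Define, for $t=1,\dots,T$, $u'_t=\sum_{k=1}^{t}\beta^{t-k}c_k$ (equivalently $u'_0=0$, $u'_t=\beta u'_{t-1}+c_t$), and define $A_1=0$, $d_1=V_{\mathrm{th}}$ and, for $t=2,\dots,T$, $$A_t=\begin{cases}\beta\,(1+A_{t-1}), & \text{if } u'_{t-1}\ge d_{t-1},\\ \beta\,A_{t-1}, & \text{if } u'_{t-1}< d_{t-1},\end{cases}\qquad d_t=V_{\mathrm{th}}\,(A_t+1).$$ Then for every $t=1,\dots,T$, $s_t=\mathcal{H}(u'_t-d_t)$; that is, the spike train obtained from the decoupled-reset computation (in which $u'_1,\dots,u'_T$ do not depend on any spikes and $d_1,\dots,d_T$ are obtained from $u'_1,\dots,u'_T$ alone) coincides with that of the sequential LIF neuron with soft reset.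
   Context: The sequence $(u'_1,\dots,u'_T)$ is the discrete convolution of $(c_1,\dots,c_T)$ with the kernel $(\beta^0,\beta^1,\dots,\beta^{T-1})$, so it can be computed in parallel (e.g. via FFT), while $(d_t)$ is obtained by a single linear-time scan over $(u'_t)$. *)

theory Defs
  imports Complex_Main
begin

definition heaviside :: "real \<Rightarrow> real" where
  "heaviside x = (if x \<ge> 0 then 1 else 0)"

text \<open>Sequential LIF neuron with soft reset: returns the pair (u_t, s_t);
  the input sequence is c_1, c_2, ... (c 0 is unused).\<close>
fun lif :: "real \<Rightarrow> real \<Rightarrow> (nat \<Rightarrow> real) \<Rightarrow> nat \<Rightarrow> real \<times> real" where
  "lif \<beta> Vth c 0 = (0, 0)"
| "lif \<beta> Vth c (Suc t) =
     (let (u, s) = lif \<beta> Vth c t;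
          u' = \<beta> * (u - Vth * s) + c (Suc t)
      in (u', heaviside (u' - Vth)))"

definition lif_u :: "real \<Rightarrow> real \<Rightarrow> (nat \<Rightarrow> real) \<Rightarrow> nat \<Rightarrow> real" where
  "lif_u \<beta> Vth c t = fst (lif \<beta> Vth c t)"

definition lif_s :: "real \<Rightarrow> real \<Rightarrow> (nat \<Rightarrow> real) \<Rightarrow> nat \<Rightarrow> real" where
  "lif_s \<beta> Vth c t = snd (lif \<beta> Vth c t)"

definition dec_u :: "real \<Rightarrow> (nat \<Rightarrow> real) \<Rightarrow> nat \<Rightarrow> real" where
  "dec_u \<beta> c t = (\<Sum>k=1..t. \<beta> ^ (t - k) * c k)"

text \<open>Decoupled reset: returns (A_t, d_t) for t \<ge> 1 (value at 0 is irrelevant and is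
  mapped to the t = 1 value).\<close>
fun dec_Ad :: "real \<Rightarrow> real \<Rightarrow> (nat \<Rightarrow> real) \<Rightarrow> nat \<Rightarrow> real \<times> real" where
  "dec_Ad \<beta> Vth c 0 = (0, Vth)"
| "dec_Ad \<beta> Vth c (Suc 0) = (0, Vth)"
| "dec_Ad \<beta> Vth c (Suc (Suc t)) =
     (let (A, d) = dec_Ad \<beta> Vth c (Suc t);
          A' = (if dec_u \<beta> c (Suc t) \<ge> d then \<beta> * (1 + A) else \<beta> * A)
      in (A', Vth * (A' + 1)))"

definition dec_A :: "real \<Rightarrow> real \<Rightarrow> (nat \<Rightarrow> real) \<Rightarrow> nat \<Rightarrow> real" where
  "dec_A \<beta> Vth c t = fst (dec_Ad \<beta> Vth c t)"

definition dec_d :: "real \<Rightarrow> real \<Rightarrow> (nat \<Rightarrow> real) \<Rightarrow> nat \<Rightarrow> real" where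
  "dec_d \<beta> Vth c t = snd (dec_Ad \<beta> Vth c t)"

end

theory Submission
  imports Defs
begin

text \<open>Unrolling the soft reset gives u_t = u'_t - Vth * A_t, where A_t is the
  \<beta>-discounted count of the spikes before time t. The decoupled recursion computes
  exactly this A_t, since by the invariant the test u'_t \<ge> d_t is the spike condition
  u_t \<ge> Vth. Hence u_t - Vth = u'_t - d_t.\<close>

lemma dec_u_0 [simp]: "dec_u \<beta> c 0 = 0"
  by (simp add: dec_u_def)

lemma dec_u_Suc: "dec_u \<beta> c (Suc t) = \<beta> * dec_u \<beta> c t + c (Suc t)"
proof -
  have "dec_u \<beta> c (Suc t) = (\<Sum>k=1..t. \<beta> ^ (Suc t - k) * c k) + c (Suc t)"
    unfolding dec_u_def by simp
  also have "(\<Sum>k=1..t. \<beta> ^ (Suc t - k) * c k) = \<beta> * dec_u \<beta> c t"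
    unfolding dec_u_def sum_distrib_left
    by (rule sum.cong) (auto simp: Suc_diff_le)
  finally show ?thesis .
qed

lemma lif_u_0 [simp]: "lif_u \<beta> Vth c 0 = 0"
  and lif_s_0 [simp]: "lif_s \<beta> Vth c 0 = 0"
  by (simp_all add: lif_u_def lif_s_def)

lemma lif_u_Suc:
  "lif_u \<beta> Vth c (Suc t) = \<beta> * (lif_u \<beta> Vth c t - Vth * lif_s \<beta> Vth c t) + c (Suc t)"
  by (simp add: lif_u_def lif_s_def case_prod_beta Let_def)

lemma lif_s_eq_heaviside_lif_u:
  "lif_s \<beta> Vth c (Suc t) = heaviside (lif_u \<beta> Vth c (Suc t) - Vth)"
  by (simp add: lif_u_def lif_s_def case_prod_beta Let_def)

lemma dec_d_eq: "dec_d \<beta> Vth c t = Vth * (dec_A \<beta> Vth c t + 1)"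
  by (induction \<beta> Vth c t rule: dec_Ad.induct)
    (simp_all add: dec_A_def dec_d_def case_prod_beta Let_def)

lemma dec_A_0 [simp]: "dec_A \<beta> Vth c 0 = 0"
  and dec_A_1 [simp]: "dec_A \<beta> Vth c (Suc 0) = 0"
  by (simp_all add: dec_A_def)

lemma dec_A_Suc_Suc:
  "dec_A \<beta> Vth c (Suc (Suc t)) =
     \<beta> * (dec_A \<beta> Vth c (Suc t) + heaviside (dec_u \<beta> c (Suc t) - dec_d \<beta> Vth c (Suc t)))"
  by (simp add: dec_A_def dec_d_def heaviside_def case_prod_beta Let_def)

lemma lif_u_eq_dec_u_minus_reset:
  "lif_u \<beta> Vth c t = dec_u \<beta> c t - Vth * dec_A \<beta> Vth c t"
proof (induction \<beta> Vth c t rule: dec_Ad.induct)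
  case (1 \<beta> Vth c)
  then show ?case by simp
next
  case (2 \<beta> Vth c)
  then show ?case by (simp add: lif_u_Suc dec_u_Suc)
next
  case (3 \<beta> Vth c t)
  have "lif_u \<beta> Vth c (Suc t) - Vth = dec_u \<beta> c (Suc t) - dec_d \<beta> Vth c (Suc t)"
    using 3 by (simp add: dec_d_eq algebra_simps)
  then have spike: "lif_s \<beta> Vth c (Suc t) = heaviside (dec_u \<beta> c (Suc t) - dec_d \<beta> Vth c (Suc t))"
    by (simp add: lif_s_eq_heaviside_lif_u)
  have "lif_u \<beta> Vth c (Suc (Suc t))
      = \<beta> * (lif_u \<beta> Vth c (Suc t) - Vth * lif_s \<beta> Vth c (Suc t)) + c (Suc (Suc t))"
    by (rule lif_u_Suc)
  also have "\<dots> = dec_u \<beta> c (Suc (Suc t)) - Vth * dec_A \<beta> Vth c (Suc (Suc t))"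
    unfolding 3 spike dec_u_Suc[of _ _ "Suc t"] dec_A_Suc_Suc by (simp add: algebra_simps)
  finally show ?case .
qed

theorem mainTheorem1:
  fixes \<beta> Vth :: real and c :: "nat \<Rightarrow> real" and T :: nat
  assumes "0 < \<beta>" and "\<beta> < 1"
  shows "\<forall>t\<in>{1..T}. lif_s \<beta> Vth c t = heaviside (dec_u \<beta> c t - dec_d \<beta> Vth c t)"
proof
  fix t assume "t \<in> {1..T}"
  then obtain n where t: "t = Suc n" by (cases t) auto
  have "lif_u \<beta> Vth c t - Vth = dec_u \<beta> c t - dec_d \<beta> Vth c t"
    by (simp add: lif_u_eq_dec_u_minus_reset dec_d_eq algebra_simps)
  then show "lif_s \<beta> Vth c t = heaviside (dec_u \<beta> c t - dec_d \<beta> Vth c t)"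
    unfolding t by (simp add: lif_s_eq_heaviside_lif_u)
qed

end
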